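(* Let $\mathcal{A}\in\mathbb{C}^{I_{1\ldots N}\times I_{1\ldots N}}$, and let $\mathcal{M},\mathcal{N}\in\mathbb{C}^{I_{1\ldots N}\times I_{1\ldots N}}$ be Hermitian positive definite tensors. Let $\{\mathcal{U}_1,\ldots,\mathcal{U}_r\}\subset\mathbb{C}^{I_{1\ldots N}}$ be $\mathcal{M}$-orthonormal and $\{\mathcal{V}_1,\ldots,\mathcal{V}_r\}\subset\mathbb{C}^{I_{1\ldots N}}$ be $\mathcal{N}^{-1}$-orthonormal. If $\mathcal{A}=\mathcal{U}_1*_1\mathcal{V}_1^H+\cdots+\mathcal{U}_r*_1\mathcal{V}_r^H$, then $$\mathcal{A}^{\dagger}_{\mathcal{M},\mathcal{N}}=\mathcal{N}^{-1}*_N(\mathcal{V}_1*_1\mathcal{U}_1^H+\cdots+\mathcal{V}_r*_1\mathcal{U}_r^H)*_N\mathcal{M}$$ and $W(\mathcal{A}^{\dagger}_{\mathcal{M},\mathcal{N}})=W(\mathcal{A}^{\#}_{\mathcal{M}\mathcal{N}})$.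
   Context: Write $I_{1\ldots N}$ for $I_1\times\cdots\times I_N$. Einstein product: $(\mathcal{A}*_N\mathcal{B})_{i_1\ldots i_Nj_1\ldots j_L}=\sum_{k_1,\ldots,k_N}a_{i_1\ldots i_Nk_1\ldots k_N}b_{k_1\ldots k_Nj_1\ldots j_L}$ (also when $\mathcal{B}\in\mathbb{C}^{I_{1\ldots N}}$). $\mathcal{A}^H$ is the conjugate transpose; inverses are w.r.t. $*_N$. For $\mathcal{X},\mathcal{Y}\in\mathbb{C}^{I_{1\ldots N}}$, $\mathcal{X}*_1\mathcal{Y}^H$ denotes the tensor in $\mathbb{C}^{I_{1\ldots N}\times I_{1\ldots N}}$ with $(i_1,\ldots,i_N,j_1,\ldots,j_N)$-entry $x_{i_1\ldots i_N}\overline{y_{j_1\ldots j_N}}$. $\langle\mathcal{X},\mathcal{Y}\rangle=\mathcal{Y}^H*_N\mathcal{X}=\sum\overline{y_{i_1\ldots i_N}}x_{i_1\ldots i_N}$ and $\|\mathcal{X}\|=\langle\mathcal{X},\mathcal{X}\rangle^{1/2}$. $\mathcal{M}$ is Hermitian positive definite if $\mathcal{M}^H=\mathcal{M}$ and $\langle\mathcal{M}*_N\mathcal{X},\mathcal{X}\rangle>0$ for nonzero $\mathcal{X}$. For a Hermitian positive definite $\mathcal{P}$, a set $\{\mathcal{X}_1,\ldots,\mathcal{X}_r\}$ is $\mathcal{P}$-orthonormal if $\langle\mathcal{P}*_N\mathcal{X}_i,\mathcal{X}_j\rangle=\delta_{ij}$. Numerical range: $W(\mathcal{A})=\{\langle\mathcal{A}*_N\mathcal{X},\mathcal{X}\rangle:\|\mathcal{X}\|=1\}$.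 Weighted conjugate transpose: $\mathcal{A}^{\#}_{\mathcal{M}\mathcal{N}}=\mathcal{N}^{-1}*_N\mathcal{A}^H*_N\mathcal{M}$. Weighted Moore-Penrose inverse $\mathcal{A}^{\dagger}_{\mathcal{M},\mathcal{N}}$: the unique $\mathcal{X}$ with $\mathcal{A}*_N\mathcal{X}*_N\mathcal{A}=\mathcal{A}$, $\mathcal{X}*_N\mathcal{A}*_N\mathcal{X}=\mathcal{X}$, $(\mathcal{M}*_N\mathcal{A}*_N\mathcal{X})^H=\mathcal{M}*_N\mathcal{A}*_N\mathcal{X}$, $(\mathcal{N}*_N\mathcal{X}*_N\mathcal{A})^H=\mathcal{N}*_N\mathcal{X}*_N\mathcal{A}$. *)

theory Defs
  imports Complex_Main "HOL-Library.Complex_Order" "HOL-Library.Function_Algebras"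
begin

text \<open>Dimensions I_1,...,I_N are given as a list ds of length N.
  A multi-index (i_1,...,i_N) is a list; the index set I_1 x ... x I_N is tidx ds
  (0-based indices). Order-N tensors are functions nat list => complex, order-2N tensors
  are functions nat list => nat list => complex (first block of N indices, second block);
  they are required to vanish outside the index set.\<close>

definition tidx :: "nat list \<Rightarrow> nat list set" where
  "tidx ds = {is. length is = length ds \<and> (\<forall>k<length ds. is ! k < ds ! k)}"

definition vspace :: "nat list \<Rightarrow> (nat list \<Rightarrow> complex) set" where
  "vspace ds = {X. \<forall>i. i \<notin> tidx ds \<longrightarrow> X i = 0}"

definition tspace :: "nat list \<Rightarrow> (nat list \<Rightarrow> nat list \<Rightarrow> complex) set" where
  "tspace ds = {A. \<forall>i j. (i \<notin> tidx ds \<or> j \<notin> tidx ds) \<longrightarrow> A i j = 0}"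

definition eprod :: "nat list \<Rightarrow> (nat list \<Rightarrow> nat list \<Rightarrow> complex) \<Rightarrow> (nat list \<Rightarrow> nat list \<Rightarrow> complex) \<Rightarrow> (nat list \<Rightarrow> nat list \<Rightarrow> complex)" where
  "eprod ds A B = (\<lambda>i j. if i \<in> tidx ds \<and> j \<in> tidx ds then (\<Sum>k\<in>tidx ds. A i k * B k j) else 0)"

definition evprod :: "nat list \<Rightarrow> (nat list \<Rightarrow> nat list \<Rightarrow> complex) \<Rightarrow> (nat list \<Rightarrow> complex) \<Rightarrow> (nat list \<Rightarrow> complex)" where
  "evprod ds A X = (\<lambda>i. if i \<in> tidx ds then (\<Sum>k\<in>tidx ds. A i k * X k) else 0)"

definition ctrans :: "nat list \<Rightarrow> (nat list \<Rightarrow> nat list \<Rightarrow> complex) \<Rightarrow> (nat list \<Rightarrow> nat list \<Rightarrow> complex)" where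
  "ctrans ds A = (\<lambda>i j. if i \<in> tidx ds \<and> j \<in> tidx ds then cnj (A j i) else 0)"

definition tid :: "nat list \<Rightarrow> (nat list \<Rightarrow> nat list \<Rightarrow> complex)" where
  "tid ds = (\<lambda>i j. if i \<in> tidx ds \<and> j \<in> tidx ds \<and> i = j then 1 else 0)"

definition tinv :: "nat list \<Rightarrow> (nat list \<Rightarrow> nat list \<Rightarrow> complex) \<Rightarrow> (nat list \<Rightarrow> nat list \<Rightarrow> complex)" where
  "tinv ds A = (THE X. X \<in> tspace ds \<and> eprod ds A X = tid ds \<and> eprod ds X A = tid ds)"

definition outer :: "nat list \<Rightarrow> (nat list \<Rightarrow> complex) \<Rightarrow> (nat list \<Rightarrow> complex) \<Rightarrow> (nat list \<Rightarrow> nat list \<Rightarrow> complex)" where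
  "outer ds X Y = (\<lambda>i j. if i \<in> tidx ds \<and> j \<in> tidx ds then X i * cnj (Y j) else 0)"

definition tinner :: "nat list \<Rightarrow> (nat list \<Rightarrow> complex) \<Rightarrow> (nat list \<Rightarrow> complex) \<Rightarrow> complex" where
  "tinner ds X Y = (\<Sum>i\<in>tidx ds. cnj (Y i) * X i)"

definition tnorm :: "nat list \<Rightarrow> (nat list \<Rightarrow> complex) \<Rightarrow> real" where
  "tnorm ds X = sqrt (Re (tinner ds X X))"

definition hpd :: "nat list \<Rightarrow> (nat list \<Rightarrow> nat list \<Rightarrow> complex) \<Rightarrow> bool" where
  "hpd ds M \<longleftrightarrow> M \<in> tspace ds \<and> ctrans ds M = M \<and>
     (\<forall>X\<in>vspace ds. X \<noteq> 0 \<longrightarrow> tinner ds (evprod ds M X) X > 0)"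

definition orthonormal_wrt :: "nat list \<Rightarrow> (nat list \<Rightarrow> nat list \<Rightarrow> complex) \<Rightarrow> nat \<Rightarrow> (nat \<Rightarrow> nat list \<Rightarrow> complex) \<Rightarrow> bool" where
  "orthonormal_wrt ds P r U \<longleftrightarrow>
     (\<forall>i\<in>{1..r}. U i \<in> vspace ds) \<and>
     (\<forall>i\<in>{1..r}. \<forall>j\<in>{1..r}. tinner ds (evprod ds P (U i)) (U j) = (if i = j then 1 else 0))"

definition numrange :: "nat list \<Rightarrow> (nat list \<Rightarrow> nat list \<Rightarrow> complex) \<Rightarrow> complex set" where
  "numrange ds A = {tinner ds (evprod ds A X) X | X. X \<in> vspace ds \<and> tnorm ds X = 1}"

definition wctrans :: "nat list \<Rightarrow> (nat list \<Rightarrow> nat list \<Rightarrow> complex) \<Rightarrow> (nat list \<Rightarrow> nat list \<Rightarrow> complex) \<Rightarrow> (nat list \<Rightarrow> nat list \<Rightarrow> complex) \<Rightarrow> (nat list \<Rightarrow> nat list \<Rightarrow> complex)" where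
  "wctrans ds A M N = eprod ds (eprod ds (tinv ds N) (ctrans ds A)) M"

definition wmpinv :: "nat list \<Rightarrow> (nat list \<Rightarrow> nat list \<Rightarrow> complex) \<Rightarrow> (nat list \<Rightarrow> nat list \<Rightarrow> complex) \<Rightarrow> (nat list \<Rightarrow> nat list \<Rightarrow> complex) \<Rightarrow> (nat list \<Rightarrow> nat list \<Rightarrow> complex)" where
  "wmpinv ds A M N = (THE X. X \<in> tspace ds \<and>
      eprod ds (eprod ds A X) A = A \<and>
      eprod ds (eprod ds X A) X = X \<and>
      ctrans ds (eprod ds M (eprod ds A X)) = eprod ds M (eprod ds A X) \<and>
      ctrans ds (eprod ds N (eprod ds X A)) = eprod ds N (eprod ds X A))"

end

theory Submission
  imports Defs
begin

text \<open>
  Put \<open>a\<^sub>k = N\<^sup>-\<^sup>1 V\<^sub>k\<close> and \<open>b\<^sub>k = M U\<^sub>k\<close>. The two orthonormality hypotheses say exactly that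
  \<open>\<langle>a\<^sub>l, V\<^sub>k\<rangle> = \<delta>\<^sub>k\<^sub>l\<close> and \<open>\<langle>U\<^sub>l, b\<^sub>k\<rangle> = \<delta>\<^sub>k\<^sub>l\<close>, and against such biorthogonal families
  a product of two sums of outer products collapses to a single sum. Hence
  \<open>X = \<Sum> a\<^sub>k b\<^sub>k\<^sup>H\<close> satisfies \<open>AXA = A\<close> and \<open>XAX = X\<close>, while \<open>MAX = \<Sum> b\<^sub>k b\<^sub>k\<^sup>H\<close> and
  \<open>NXA = \<Sum> V\<^sub>k V\<^sub>k\<^sup>H\<close> are Hermitian. For Hermitian positive definite weights the four
  Penrose equations have at most one solution, so \<open>X\<close> is the weighted Moore-Penrose
  inverse; and \<open>X\<close> is literally \<open>N\<^sup>-\<^sup>1 A\<^sup>H M = A\<^sup>#\<^sub>M\<^sub>N\<close>, so the numerical ranges coincide.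
  The only step that is not tensor algebra is that \<open>tinv N\<close> really inverts \<open>N\<close>:
  \<open>N\<close> is injective by positive definiteness, hence surjective on the finite-dimensional
  space of order-\<open>N\<close> tensors.
\<close>

lemma sum_apply: "(\<Sum>k\<in>K. F k) x = (\<Sum>k\<in>K. F k x)"
  by (induction K rule: infinite_finite_induct) auto

lemma (in vector_space) linear_inj_on_span_imp_surj:
  assumes "Vector_Spaces.linear scale scale f" "finite B"
    and "inj_on f (span B)" "f ` span B \<subseteq> span B"
  shows "f ` span B = span B"
proof -
  interpret f: Vector_Spaces.linear scale scale f by fact
  obtain C where C: "C \<subseteq> span B" "independent C" "span B \<subseteq> span C"
    using basis_exists[of "span B"] by metis
  have span_C: "span C = span B"
    using C(3) span_mono[OF C(1)] by (simp add: span_span)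
  have fin_C: "finite C"
    using independent_span_bound[OF assms(2) C(2,1)] by simp
  have card_C: "card (f ` C) = card C"
    using inj_on_subset[OF assms(3) C(1)] by (rule card_image)
  have indep_fC: "independent (f ` C)"
    using f.independent_injective_image[OF C(2)] assms(3) by (simp add: span_C)
  have "y \<in> span (f ` C)" if y: "y \<in> span B" for y
  proof (rule ccontr)
    assume y_notin: "y \<notin> span (f ` C)"
    have "insert y (f ` C) \<subseteq> span C"
      using y C(1) assms(4) span_C by blast
    then have "card (insert y (f ` C)) \<le> card C"
      using independent_span_bound[OF fin_C independent_insertI[OF y_notin indep_fC]] by blast
    moreover have "y \<notin> f ` C"
      using y_notin span_base by blast
    ultimately show False
      using fin_C card_C by simp
  qed
  then have "span B \<subseteq> f ` span B"
    using f.span_image span_C by auto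
  with assms(4) show ?thesis
    by blast
qed

type_synonym vec = "nat list \<Rightarrow> complex"
type_synonym tensor = "nat list \<Rightarrow> nat list \<Rightarrow> complex"

lemma finite_tidx: "finite (tidx ds)"
proof (rule finite_subset)
  show "tidx ds \<subseteq> {xs. set xs \<subseteq> {..<sum_list ds} \<and> length xs = length ds}"
    by (auto simp: tidx_def in_set_conv_nth) (metis elem_le_sum_list less_le_trans)
  show "finite {xs. set xs \<subseteq> {..<sum_list ds} \<and> length xs = length ds}"
    by (rule finite_lists_length_eq) simp
qed

lemma eprod_tspace [simp]: "eprod ds A B \<in> tspace ds"
  by (auto simp: eprod_def tspace_def)

lemma tid_tspace [simp]: "tid ds \<in> tspace ds"
  by (auto simp: tid_def tspace_def)

lemma evprod_vspace [simp]: "evprod ds A X \<in> vspace ds"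
  by (auto simp: evprod_def vspace_def)

lemma eprod_assoc: "eprod ds (eprod ds A B) C = eprod ds A (eprod ds B C)"
  unfolding eprod_def
  by (auto simp: fun_eq_iff sum_distrib_left sum_distrib_right mult.assoc
      intro: sum.swap[THEN trans] cong: if_cong)

lemma evprod_eprod: "evprod ds (eprod ds A B) X = evprod ds A (evprod ds B X)"
  unfolding eprod_def evprod_def
  by (auto simp: fun_eq_iff sum_distrib_left sum_distrib_right mult.assoc
      intro: sum.swap[THEN trans] cong: if_cong)

lemma eprod_tid_left: "A \<in> tspace ds \<Longrightarrow> eprod ds (tid ds) A = A"
  by (auto simp: fun_eq_iff eprod_def tid_def tspace_def if_distrib[of "\<lambda>x. x * _"]
      finite_tidx cong: if_cong)

lemma eprod_tid_right: "A \<in> tspace ds \<Longrightarrow> eprod ds A (tid ds) = A"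
  by (auto simp: fun_eq_iff eprod_def tid_def tspace_def if_distrib[of "\<lambda>x. _ * x"]
      finite_tidx cong: if_cong)

lemma evprod_tid: "X \<in> vspace ds \<Longrightarrow> evprod ds (tid ds) X = X"
  by (auto simp: fun_eq_iff evprod_def tid_def vspace_def if_distrib[of "\<lambda>x. x * _"]
      finite_tidx cong: if_cong)

lemma eprod_sum_left: "eprod ds (\<Sum>k\<in>K. F k) B = (\<Sum>k\<in>K. eprod ds (F k) B)"
  by (auto simp: fun_eq_iff eprod_def sum_apply sum_distrib_right intro: sum.swap)

lemma eprod_sum_right: "eprod ds B (\<Sum>k\<in>K. F k) = (\<Sum>k\<in>K. eprod ds B (F k))"
  by (auto simp: fun_eq_iff eprod_def sum_apply sum_distrib_left intro: sum.swap)

lemma ctrans_eprod: "ctrans ds (eprod ds A B) = eprod ds (ctrans ds B) (ctrans ds A)"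
  by (auto simp: fun_eq_iff eprod_def ctrans_def mult.commute intro!: sum.cong)

lemma ctrans_sum: "ctrans ds (\<Sum>k\<in>K. F k) = (\<Sum>k\<in>K. ctrans ds (F k))"
  by (auto simp: fun_eq_iff ctrans_def sum_apply)

lemma ctrans_outer: "ctrans ds (outer ds X Y) = outer ds Y X"
  by (auto simp: fun_eq_iff ctrans_def outer_def)

lemma cnj_tinner [simp]: "cnj (tinner ds X Y) = tinner ds Y X"
  by (simp add: tinner_def mult.commute)

lemma eprod_outer_outer:
  "eprod ds (outer ds X Y) (outer ds Z W) = outer ds (\<lambda>i. tinner ds Z Y * X i) W"
  by (auto simp: fun_eq_iff eprod_def outer_def tinner_def sum_distrib_left sum_distrib_right
      mult_ac intro!: sum.cong)

lemma eprod_outer_left: "eprod ds B (outer ds X Y) = outer ds (evprod ds B X) Y"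
  by (auto simp: fun_eq_iff eprod_def outer_def evprod_def sum_distrib_left mult_ac
      intro!: sum.cong)

lemma eprod_outer_right: "eprod ds (outer ds X Y) B = outer ds X (evprod ds (ctrans ds B) Y)"
  by (auto simp: fun_eq_iff eprod_def outer_def evprod_def ctrans_def sum_distrib_left mult_ac
      intro!: sum.cong)

lemma eprod_sum_outer_biorthogonal:
  assumes "finite K"
    and "\<And>k l. k \<in> K \<Longrightarrow> l \<in> K \<Longrightarrow> tinner ds (Z l) (Y k) = (if k = l then 1 else 0)"
  shows "eprod ds (\<Sum>k\<in>K. outer ds (X k) (Y k)) (\<Sum>l\<in>K. outer ds (Z l) (W l))
    = (\<Sum>k\<in>K. outer ds (X k) (W k))"
proof -
  have "eprod ds (\<Sum>k\<in>K. outer ds (X k) (Y k)) (\<Sum>l\<in>K. outer ds (Z l) (W l))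
      = (\<Sum>k\<in>K. \<Sum>l\<in>K. outer ds (\<lambda>i. tinner ds (Z l) (Y k) * X k i) (W l))"
    by (simp only: eprod_sum_left) (simp only: eprod_sum_right eprod_outer_outer)
  also have "\<dots> = (\<Sum>k\<in>K. \<Sum>l\<in>K. if l = k then outer ds (X k) (W k) else 0)"
    using assms(2) by (intro sum.cong) (auto simp: outer_def fun_eq_iff)
  finally show ?thesis
    using assms(1) by simp
qed

lemma hpd_evprod_eq_0D:
  assumes "hpd ds M" "X \<in> vspace ds" "evprod ds M X = 0"
  shows "X = 0"
proof (rule ccontr)
  assume "X \<noteq> 0"
  then have "tinner ds (evprod ds M X) X > 0"
    using assms(1,2) by (auto simp: hpd_def)
  with assms(3) show False
    by (simp add: tinner_def)
qed

lemma hpd_eprod_left_cancel: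
  assumes M: "hpd ds M" and "Z \<in> tspace ds" "Z' \<in> tspace ds"
    and eq: "eprod ds M Z = eprod ds M Z'"
  shows "Z = Z'"
proof (intro ext)
  fix i j
  show "Z i j = Z' i j"
  proof (cases "j \<in> tidx ds")
    case j: True
    define X where "X = (\<lambda>i. Z i j - Z' i j)"
    have "X \<in> vspace ds"
      using assms(2,3) by (auto simp: tspace_def vspace_def X_def)
    moreover have "evprod ds M X = 0"
    proof
      fix i
      show "evprod ds M X i = 0 i"
        using fun_cong[OF fun_cong[OF eq, of i], of j] j
        by (auto simp: evprod_def eprod_def X_def right_diff_distrib sum_subtractf)
    qed
    ultimately have "X = 0"
      using hpd_evprod_eq_0D[OF M] by blast
    then show ?thesis
      by (simp add: X_def fun_eq_iff)
  qed (use assms(2,3) in \<open>auto simp: tspace_def\<close>)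
qed

text \<open>Functions \<open>nat list \<Rightarrow> complex\<close> carry no complex-module instance, so the scalar
  multiplication for the \<open>vector_space\<close> locale is given explicitly.\<close>

definition cscale :: "complex \<Rightarrow> vec \<Rightarrow> vec" where
  "cscale c X = (\<lambda>i. c * X i)"

interpretation cvs: vector_space cscale
  by unfold_locales (auto simp: fun_eq_iff algebra_simps cscale_def)

lemma linear_evprod: "Vector_Spaces.linear cscale cscale (evprod ds A)"
  unfolding Vector_Spaces.linear_iff
  by (simp add: cvs.vector_space_axioms fun_eq_iff evprod_def cscale_def distrib_left
      sum.distrib sum_distrib_left mult.left_commute)

lemma vspace_eq_span: "vspace ds = cvs.span (tid ds ` tidx ds)"
proof
  show "vspace ds \<subseteq> cvs.span (tid ds ` tidx ds)"
  proof
    fix X assume X: "X \<in> vspace ds"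
    have "X x = (\<Sum>i\<in>tidx ds. cscale (X i) (tid ds i)) x" for x
    proof (cases "x \<in> tidx ds")
      case True
      have "(\<Sum>i\<in>tidx ds. cscale (X i) (tid ds i)) x = (\<Sum>i\<in>tidx ds. if i = x then X i else 0)"
        using True by (auto simp: sum_apply cscale_def tid_def intro!: sum.cong)
      with True show ?thesis
        by (simp add: finite_tidx)
    qed (use X in \<open>simp add: sum_apply cscale_def tid_def vspace_def\<close>)
    then have "X = (\<Sum>i\<in>tidx ds. cscale (X i) (tid ds i))" ..
    also have "\<dots> \<in> cvs.span (tid ds ` tidx ds)"
      by (intro cvs.span_sum cvs.span_scale cvs.span_base) auto
    finally show "X \<in> cvs.span (tid ds ` tidx ds)" .
  qed
  have "cvs.subspace (vspace ds)"
    by (auto simp: cvs.subspace_def vspace_def cscale_def)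
  then show "cvs.span (tid ds ` tidx ds) \<subseteq> vspace ds"
    by (rule cvs.span_minimal[rotated]) (auto simp: vspace_def tid_def)
qed

lemma hpd_evprod_surj:
  assumes "hpd ds M"
  shows "evprod ds M ` vspace ds = vspace ds"
proof -
  interpret M: Vector_Spaces.linear cscale cscale "evprod ds M"
    by (rule linear_evprod)
  have "inj_on (evprod ds M) (vspace ds)"
  proof (rule inj_onI)
    fix X Y assume XY: "X \<in> vspace ds" "Y \<in> vspace ds" "evprod ds M X = evprod ds M Y"
    have "X - Y \<in> vspace ds"
      using XY(1,2) by (simp add: vspace_def)
    moreover have "evprod ds M (X - Y) = 0"
      using XY(3) by (simp add: M.diff)
    ultimately show "X = Y"
      using hpd_evprod_eq_0D[OF assms] by fastforce
  qed
  moreover have "finite (tid ds ` tidx ds)"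
    by (simp add: finite_tidx)
  ultimately show ?thesis
    using cvs.linear_inj_on_span_imp_surj[OF linear_evprod, of "tid ds ` tidx ds" ds M]
    by (simp add: vspace_eq_span[symmetric] image_subset_iff)
qed

lemma hpd_right_inverse:
  assumes "hpd ds M"
  obtains R where "R \<in> tspace ds" "eprod ds M R = tid ds"
proof -
  have "tid ds j \<in> evprod ds M ` vspace ds" for j
    unfolding hpd_evprod_surj[OF assms] by (simp add: vspace_def tid_def)
  then have "\<forall>j. \<exists>X. X \<in> vspace ds \<and> evprod ds M X = tid ds j"
    by (metis imageE)
  then obtain Z where Z: "\<And>j. Z j \<in> vspace ds" "\<And>j. evprod ds M (Z j) = tid ds j"
    by metis
  define R where "R = (\<lambda>i j. if j \<in> tidx ds then Z j i else 0)"
  have "R \<in> tspace ds"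
    using Z(1) by (simp add: R_def tspace_def vspace_def)
  moreover have "eprod ds M R i j = tid ds i j" for i j
  proof (cases "i \<in> tidx ds \<and> j \<in> tidx ds")
    case True
    then have "eprod ds M R i j = evprod ds M (Z j) i"
      by (simp add: eprod_def evprod_def R_def)
    also have "\<dots> = tid ds i j"
      using True by (simp add: Z(2) tid_def)
    finally show ?thesis .
  qed (auto simp: eprod_def tid_def)
  ultimately show ?thesis
    using that by blast
qed

lemma hpd_eprod_tinv:
  assumes M: "hpd ds M"
  shows "eprod ds M (tinv ds M) = tid ds"
proof -
  obtain R where R: "R \<in> tspace ds" "eprod ds M R = tid ds"
    using hpd_right_inverse[OF M] .
  have "M \<in> tspace ds"
    using M by (simp add: hpd_def)
  then have "eprod ds M (eprod ds R M) = eprod ds M (tid ds)"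
    by (simp add: eprod_assoc[symmetric] R(2) eprod_tid_left eprod_tid_right)
  then have "eprod ds R M = tid ds"
    by (rule hpd_eprod_left_cancel[OF M, rotated 2]) simp_all
  then have "tinv ds M = R"
    unfolding tinv_def using R hpd_eprod_left_cancel[OF M] by (intro the_equality) auto
  with R(2) show ?thesis
    by simp
qed

lemma eprod_hermitian_swap:
  assumes "ctrans ds M = M"
    and "ctrans ds (eprod ds M P) = eprod ds M P" "ctrans ds (eprod ds M Q) = eprod ds M Q"
  shows "eprod ds M (eprod ds P Q) = eprod ds (ctrans ds (eprod ds Q P)) M"
proof -
  have "eprod ds M (eprod ds P Q) = eprod ds (ctrans ds (eprod ds M P)) Q"
    by (simp add: assms(2) eprod_assoc)
  also have "\<dots> = eprod ds (ctrans ds P) (eprod ds M Q)"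
    by (simp add: assms(1) ctrans_eprod eprod_assoc)
  also have "\<dots> = eprod ds (ctrans ds P) (ctrans ds (eprod ds M Q))"
    by (simp only: assms(3))
  also have "\<dots> = eprod ds (ctrans ds (eprod ds Q P)) M"
    by (simp add: assms(1) ctrans_eprod eprod_assoc)
  finally show ?thesis .
qed

definition is_wmpinv :: "nat list \<Rightarrow> tensor \<Rightarrow> tensor \<Rightarrow> tensor \<Rightarrow> tensor \<Rightarrow> bool" where
  "is_wmpinv ds A M N X \<longleftrightarrow> X \<in> tspace ds \<and>
      eprod ds (eprod ds A X) A = A \<and>
      eprod ds (eprod ds X A) X = X \<and>
      ctrans ds (eprod ds M (eprod ds A X)) = eprod ds M (eprod ds A X) \<and>
      ctrans ds (eprod ds N (eprod ds X A)) = eprod ds N (eprod ds X A)"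

lemma is_wmpinv_unique:
  assumes M: "hpd ds M" and N: "hpd ds N"
    and X: "is_wmpinv ds A M N X" and Y: "is_wmpinv ds A M N Y"
  shows "X = Y"
proof -
  have M_herm: "ctrans ds M = M" and N_herm: "ctrans ds N = N"
    using M N by (simp_all add: hpd_def)
  have "eprod ds M (eprod ds A Y) = eprod ds M (eprod ds (eprod ds A X) (eprod ds A Y))"
    using X by (simp add: is_wmpinv_def eprod_assoc[symmetric])
  also have "\<dots> = eprod ds (ctrans ds (eprod ds (eprod ds A Y) (eprod ds A X))) M"
    using X Y by (intro eprod_hermitian_swap M_herm) (simp_all add: is_wmpinv_def)
  also have "\<dots> = eprod ds M (eprod ds A X)"
    using X Y by (simp add: is_wmpinv_def eprod_assoc[symmetric] ctrans_eprod M_herm)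
  finally have AX_eq: "eprod ds A X = eprod ds A Y"
    by (rule hpd_eprod_left_cancel[OF M, rotated 2, symmetric]) simp_all
  have "eprod ds N (eprod ds X A) = eprod ds N (eprod ds (eprod ds X A) (eprod ds Y A))"
    using Y by (simp add: is_wmpinv_def eprod_assoc)
  also have "\<dots> = eprod ds (ctrans ds (eprod ds (eprod ds Y A) (eprod ds X A))) N"
    using X Y by (intro eprod_hermitian_swap N_herm) (simp_all add: is_wmpinv_def)
  also have "\<dots> = eprod ds N (eprod ds Y A)"
    using X Y by (simp add: is_wmpinv_def eprod_assoc ctrans_eprod N_herm)
  finally have XA_eq: "eprod ds X A = eprod ds Y A"
    by (rule hpd_eprod_left_cancel[OF N, rotated 2]) simp_all
  have "X = eprod ds (eprod ds X A) X"
    using X by (simp add: is_wmpinv_def)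
  also have "\<dots> = eprod ds Y (eprod ds A Y)"
    by (simp add: XA_eq AX_eq eprod_assoc)
  also have "\<dots> = Y"
    using Y by (simp add: is_wmpinv_def eprod_assoc)
  finally show ?thesis .
qed

lemma wmpinv_eqI:
  assumes "hpd ds M" "hpd ds N" "is_wmpinv ds A M N X"
  shows "wmpinv ds A M N = X"
  unfolding wmpinv_def is_wmpinv_def[symmetric]
  using assms is_wmpinv_unique by blast

lemma wmpinv_sum_outer:
  assumes M: "hpd ds M" and N: "hpd ds N" and K: "finite K"
    and NW: "\<And>k. k \<in> K \<Longrightarrow> evprod ds N (W k) = V k"
    and WV: "\<And>k l. k \<in> K \<Longrightarrow> l \<in> K \<Longrightarrow>
      tinner ds (W l) (V k) = (if k = l then 1 else 0)"
    and MU: "\<And>k l. k \<in> K \<Longrightarrow> l \<in> K \<Longrightarrow>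
      tinner ds (evprod ds M (U k)) (U l) = (if k = l then 1 else 0)"
  shows "wmpinv ds (\<Sum>k\<in>K. outer ds (U k) (V k)) M N
    = (\<Sum>k\<in>K. outer ds (W k) (evprod ds M (U k)))"
proof (rule wmpinv_eqI[OF M N])
  define A where "A = (\<Sum>k\<in>K. outer ds (U k) (V k))"
  define B where "B k = evprod ds M (U k)" for k
  define X where "X = (\<Sum>k\<in>K. outer ds (W k) (B k))"
  have UB: "tinner ds (U l) (B k) = (if k = l then 1 else 0)" if "k \<in> K" "l \<in> K" for k l
    using MU[OF that] by (metis B_def cnj_tinner complex_cnj_one complex_cnj_zero)
  have AX: "eprod ds A X = (\<Sum>k\<in>K. outer ds (U k) (B k))"
    unfolding A_def X_def using K WV by (rule eprod_sum_outer_biorthogonal)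
  have XA: "eprod ds X A = (\<Sum>k\<in>K. outer ds (W k) (V k))"
    unfolding A_def X_def using K UB by (rule eprod_sum_outer_biorthogonal)
  have "X \<in> tspace ds"
    by (auto simp: X_def tspace_def outer_def sum_apply)
  moreover have "eprod ds (eprod ds A X) A = A"
    unfolding AX unfolding A_def using K UB by (rule eprod_sum_outer_biorthogonal)
  moreover have "eprod ds (eprod ds X A) X = X"
    unfolding XA unfolding X_def using K WV by (rule eprod_sum_outer_biorthogonal)
  moreover have "eprod ds M (eprod ds A X) = (\<Sum>k\<in>K. outer ds (B k) (B k))"
    by (simp add: AX eprod_sum_right eprod_outer_left B_def)
  moreover have "eprod ds N (eprod ds X A) = (\<Sum>k\<in>K. outer ds (V k) (V k))"
    by (simp add: XA eprod_sum_right eprod_outer_left NW)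
  ultimately show "is_wmpinv ds A M N X"
    by (simp add: is_wmpinv_def ctrans_sum ctrans_outer)
qed

theorem theorem6p13:
  fixes ds :: "nat list" and r :: nat
    and A M N :: "nat list \<Rightarrow> nat list \<Rightarrow> complex"
    and U V :: "nat \<Rightarrow> nat list \<Rightarrow> complex"
  assumes "A \<in> tspace ds"
    and "hpd ds M" and "hpd ds N"
    and "orthonormal_wrt ds M r U"
    and "orthonormal_wrt ds (tinv ds N) r V"
    and "A = (\<Sum>k\<in>{1..r}. outer ds (U k) (V k))"
  shows "wmpinv ds A M N = eprod ds (eprod ds (tinv ds N) (\<Sum>k\<in>{1..r}. outer ds (V k) (U k))) M
     \<and> numrange ds (wmpinv ds A M N) = numrange ds (wctrans ds A M N)"
proof -
  define W where "W k = evprod ds (tinv ds N) (V k)" for k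
  have M_herm: "ctrans ds M = M"
    using assms(2) by (simp add: hpd_def)
  have "evprod ds N (W k) = V k" if "k \<in> {1..r}" for k
    using assms(3,5) that
    by (simp add: W_def orthonormal_wrt_def evprod_eprod[symmetric] hpd_eprod_tinv evprod_tid)
  then have "wmpinv ds A M N = (\<Sum>k\<in>{1..r}. outer ds (W k) (evprod ds M (U k)))"
    using assms(2-5) unfolding assms(6)
    by (intro wmpinv_sum_outer) (auto simp: orthonormal_wrt_def W_def)
  moreover have "eprod ds (eprod ds (tinv ds N) (\<Sum>k\<in>{1..r}. outer ds (V k) (U k))) M
      = (\<Sum>k\<in>{1..r}. outer ds (W k) (evprod ds M (U k)))"
    by (simp add: W_def M_herm eprod_sum_left eprod_sum_right eprod_outer_left eprod_outer_right)
  moreover have "wctrans ds A M N = eprod ds (eprod ds (tinv ds N) (\<Sum>k\<in>{1..r}. outer ds (V k) (U k))) M"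
    by (simp add: wctrans_def assms(6) ctrans_sum ctrans_outer)
  ultimately show ?thesis
    by simp
qed

end
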